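(* Let $d\geq 2$, energies $E_1\leq\dots\leq E_d$, inverse temperatures $\alpha>\beta\geq0$, $\gamma_k=e^{-\alpha E_k}/\sum_i e^{-\alpha E_i}$, $\Gamma_k=e^{-\beta E_k}/\sum_i e^{-\beta E_i}$, and assume $\gamma_1>\frac12$ and $\Gamma_1<\Gamma_d+\Gamma_{d-1}$. Let $\mathbf{p}$ be a probability vector with $p_k/\gamma_k\geq p_{k+1}/\gamma_{k+1}$ for all $k$. Then $\mathbf{p}\succ_{\boldsymbol{\Gamma}}\mathbf{q}\succ_{\boldsymbol{\gamma}}\mathbf{r}$, where $$q_1=p_d+\frac{\Gamma_1-\Gamma_d}{\Gamma_{d-1}}p_{d-1},\quad q_k=\frac{\Gamma_k}{1-\Gamma_1}(1-q_1),\qquad r_1=1-\frac{1-\gamma_1}{\gamma_1}q_1,\quad r_k=\frac{\gamma_k}{\gamma_1}q_1,$$ for $k>1$. Moreover, $r_k/\gamma_k\geq r_{k+1}/\gamma_{k+1}$ for all $k$.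
   Context: For a full-support probability vector $\mathbf{g}$, $\mathbf{p}\succ_{\mathbf{g}}\mathbf{q}$ (thermomajorisation) means: ordering indices by a permutation $\pi$ with $p_{\pi_i}/g_{\pi_i}$ non-increasing in $i$, the piecewise linear curve through $\left(\sum_{i\leq j}g_{\pi_i},\sum_{i\leq j}p_{\pi_i}\right)$, $j=0,\dots,d$, is nowhere below the analogous curve of $\mathbf{q}$. *)

theory Defs
  imports Complex_Main "HOL-Combinatorics.Permutations"
begin

text \<open>Vectors on indices 1..d are modelled as functions nat => real; only values at 1..d matter.\<close>

definition prob_vec :: "nat \<Rightarrow> (nat \<Rightarrow> real) \<Rightarrow> bool" where
  "prob_vec d p \<longleftrightarrow> (\<forall>k\<in>{1..d}. 0 \<le> p k) \<and> (\<Sum>k=1..d. p k) = 1"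

definition gibbs :: "nat \<Rightarrow> real \<Rightarrow> (nat \<Rightarrow> real) \<Rightarrow> nat \<Rightarrow> real" where
  "gibbs d b E k = exp (- b * E k) / (\<Sum>i=1..d. exp (- b * E i))"

definition thermo_order :: "nat \<Rightarrow> (nat \<Rightarrow> real) \<Rightarrow> (nat \<Rightarrow> real) \<Rightarrow> (nat \<Rightarrow> nat) \<Rightarrow> bool" where
  "thermo_order d g p \<pi> \<longleftrightarrow> \<pi> permutes {1..d} \<and>
     (\<forall>i j. 1 \<le> i \<and> i \<le> j \<and> j \<le> d \<longrightarrow> p (\<pi> j) / g (\<pi> j) \<le> p (\<pi> i) / g (\<pi> i))"

text \<open>The piecewise linear curve through the points
  (sum_{i<=j} g(pi i), sum_{i<=j} p(pi i)), j = 0..d, evaluated at x in [0, sum g].\<close>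
definition thermo_curve :: "nat \<Rightarrow> (nat \<Rightarrow> real) \<Rightarrow> (nat \<Rightarrow> real) \<Rightarrow> (nat \<Rightarrow> nat) \<Rightarrow> real \<Rightarrow> real" where
  "thermo_curve d g p \<pi> x =
     (\<Sum>j=1..d. p (\<pi> j) / g (\<pi> j) *
        min (g (\<pi> j)) (max 0 (x - (\<Sum>i=1..<j. g (\<pi> i)))))"

definition thermomaj :: "nat \<Rightarrow> (nat \<Rightarrow> real) \<Rightarrow> (nat \<Rightarrow> real) \<Rightarrow> (nat \<Rightarrow> real) \<Rightarrow> bool" where
  "thermomaj d g p q \<longleftrightarrow>
     (\<exists>\<pi> \<sigma>. thermo_order d g p \<pi> \<and> thermo_order d g q \<sigma> \<and>
        (\<forall>x. 0 \<le> x \<and> x \<le> (\<Sum>k=1..d. g k) \<longrightarrow> thermo_curve d g q \<sigma> x \<le> thermo_curve d g p \<pi> x))"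

end

theory Submission
  imports Defs
begin

(* The thermomajorisation curve of p relative to g is the upper boundary of the zonotope
   {(\<Sum>k. w k * g k, \<Sum>k. w k * p k) | 0 \<le> w \<le> 1}, so p \<succ>_g v holds as soon as the
   zonotope of v lies below the curve of p. Relative to \<Gamma> resp. \<gamma>, the vectors q and r are
   proportional to the Gibbs state away from the ground level, so their zonotopes are
   parallelograms, and by convexity it suffices to place two vertices below the curve. This is
   done with explicit weights: remove level d and the fraction
   \<theta> = (\<Gamma> 1 - \<Gamma> d) / \<Gamma> (d-1) < 1 of level d-1 from p, resp. the fraction
   \<rho> = (1 - \<gamma> 1) / \<gamma> 1 < 1 of the ground level from q. The remaining vertex for p needs
   q1 \<le> p 1, which holds because p is also \<Gamma>-ordered (\<gamma>/\<Gamma> decreases with the energy);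
   the ordering of r amounts to q1 \<le> \<gamma> 1. *)

section \<open>Thermomajorisation curves and zonotopes\<close>

lemma abel_inequality:
  fixes s a :: "nat \<Rightarrow> real"
  assumes "\<forall>i j. 1 \<le> i \<and> i \<le> j \<and> j \<le> n \<longrightarrow> s j \<le> s i"
    and "\<forall>m\<le>n. 0 \<le> (\<Sum>j=1..m. a j)"
  shows "s n * (\<Sum>j=1..n. a j) \<le> (\<Sum>j=1..n. s j * a j)"
  using assms
proof (induction n)
  case (Suc n)
  have "s (Suc n) * (\<Sum>j=1..n. a j) \<le> s n * (\<Sum>j=1..n. a j)"
  proof (cases "n = 0")
    case False
    then show ?thesis using Suc.prems by (intro mult_right_mono) auto
  qed simp
  moreover have "s n * (\<Sum>j=1..n. a j) \<le> (\<Sum>j=1..n. s j * a j)"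
    using Suc by simp
  ultimately show ?case by (simp add: distrib_left)
qed simp

lemma greedy_fill_sum:
  fixes g :: "nat \<Rightarrow> real"
  assumes "0 \<le> x" and "\<forall>j\<in>{1..n}. 0 \<le> g j"
  shows "(\<Sum>j=1..n. min (g j) (max 0 (x - (\<Sum>i=1..<j. g i)))) = min x (\<Sum>j=1..n. g j)"
  using assms(2)
proof (induction n)
  case (Suc n)
  have "(\<Sum>i=1..<Suc n. g i) = (\<Sum>j=1..n. g j)"
    by (simp add: atLeastLessThanSuc_atLeastAtMost)
  moreover have "0 \<le> g (Suc n)" using Suc.prems by simp
  moreover have "(\<Sum>j=1..n. min (g j) (max 0 (x - (\<Sum>i=1..<j. g i)))) = min x (\<Sum>j=1..n. g j)"
    using Suc by simp
  ultimately show ?case by (simp add: min_def max_def)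
qed (simp add: assms(1))

text \<open>For decreasing values s, the greedy allocation of the total x into the capacities g j
  maximises \<Sum> s j * v j (fractional knapsack); the proof is Abel summation.\<close>
lemma greedy_fill_optimal:
  fixes s g v :: "nat \<Rightarrow> real"
  assumes s: "\<forall>i j. 1 \<le> i \<and> i \<le> j \<and> j \<le> d \<longrightarrow> s j \<le> s i"
    and v: "\<forall>j\<in>{1..d}. 0 \<le> v j \<and> v j \<le> g j"
    and x: "x = (\<Sum>j=1..d. v j)"
  shows "(\<Sum>j=1..d. s j * v j) \<le> (\<Sum>j=1..d. s j * min (g j) (max 0 (x - (\<Sum>i=1..<j. g i))))"
proof -
  define u where "u j = min (g j) (max 0 (x - (\<Sum>i=1..<j. g i)))" for j
  have "0 \<le> x" using x v by (auto intro: sum_nonneg)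
  have u_prefix: "(\<Sum>j=1..m. u j) = min x (\<Sum>j=1..m. g j)" if "m \<le> d" for m
    unfolding u_def using greedy_fill_sum[OF \<open>0 \<le> x\<close>, of m g] v that by force
  have v_prefix: "(\<Sum>j=1..m. v j) \<le> min x (\<Sum>j=1..m. g j)" if "m \<le> d" for m
  proof -
    have "(\<Sum>j=1..m. v j) \<le> (\<Sum>j=1..m. g j)" using v that by (intro sum_mono) auto
    moreover have "(\<Sum>j=1..m. v j) \<le> x" unfolding x using v that by (intro sum_mono2) auto
    ultimately show ?thesis by simp
  qed
  have "\<forall>m\<le>d. 0 \<le> (\<Sum>j=1..m. u j - v j)"
    using u_prefix v_prefix by (simp add: sum_subtractf)
  from abel_inequality[OF s this]
  have "s d * (\<Sum>j=1..d. u j - v j) \<le> (\<Sum>j=1..d. s j * (u j - v j))" .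
  moreover have "(\<Sum>j=1..d. v j) \<le> (\<Sum>j=1..d. g j)" using v by (intro sum_mono) auto
  then have "(\<Sum>j=1..d. u j - v j) = 0" using u_prefix[of d] x by (simp add: sum_subtractf)
  ultimately show ?thesis by (simp add: u_def right_diff_distrib sum_subtractf)
qed

definition under_zonotope :: "nat \<Rightarrow> (nat \<Rightarrow> real) \<Rightarrow> (nat \<Rightarrow> real) \<Rightarrow> real \<Rightarrow> real \<Rightarrow> bool" where
  "under_zonotope d g p x y \<longleftrightarrow>
     (\<exists>w. (\<forall>k\<in>{1..d}. 0 \<le> w k \<and> w k \<le> 1) \<and> (\<Sum>k=1..d. w k * g k) = x \<and> y \<le> (\<Sum>k=1..d. w k * p k))"

lemma under_zonotopeI:
  assumes "\<forall>k\<in>{1..d}. 0 \<le> w k \<and> w k \<le> 1" "(\<Sum>k=1..d. w k * g k) = x" "y \<le> (\<Sum>k=1..d. w k * p k)"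
  shows "under_zonotope d g p x y"
  using assms unfolding under_zonotope_def by blast

lemma under_zonotope_le:
  "under_zonotope d g p x y \<Longrightarrow> y' \<le> y \<Longrightarrow> under_zonotope d g p x y'"
  unfolding under_zonotope_def by force

lemma under_zonotope_total: "under_zonotope d g p (\<Sum>k=1..d. g k) (\<Sum>k=1..d. p k)"
  by (rule under_zonotopeI[where w = "\<lambda>_. 1"]) auto

lemma under_zonotope_subconvex:
  assumes "under_zonotope d g p x1 y1" "under_zonotope d g p x2 y2"
    and "0 \<le> a" "0 \<le> b" "a + b \<le> 1"
  shows "under_zonotope d g p (a * x1 + b * x2) (a * y1 + b * y2)"
proof -
  obtain w1 where w1: "\<forall>k\<in>{1..d}. 0 \<le> w1 k \<and> w1 k \<le> 1"
    "(\<Sum>k=1..d. w1 k * g k) = x1" "y1 \<le> (\<Sum>k=1..d. w1 k * p k)"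
    using assms(1) unfolding under_zonotope_def by blast
  obtain w2 where w2: "\<forall>k\<in>{1..d}. 0 \<le> w2 k \<and> w2 k \<le> 1"
    "(\<Sum>k=1..d. w2 k * g k) = x2" "y2 \<le> (\<Sum>k=1..d. w2 k * p k)"
    using assms(2) unfolding under_zonotope_def by blast
  define w where "w k = a * w1 k + b * w2 k" for k
  have "0 \<le> w k \<and> w k \<le> 1" if "k \<in> {1..d}" for k
  proof -
    have "a * w1 k \<le> a" "b * w2 k \<le> b"
      using w1(1) w2(1) that assms(3,4) by (auto intro: mult_left_le)
    then show ?thesis using w1(1) w2(1) that assms(3-5) by (simp add: w_def)
  qed
  moreover have "(\<Sum>k=1..d. w k * f k) = a * (\<Sum>k=1..d. w1 k * f k) + b * (\<Sum>k=1..d. w2 k * f k)"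
    for f :: "nat \<Rightarrow> real"
    by (simp add: w_def algebra_simps sum.distrib sum_distrib_left)
  moreover have "a * y1 + b * y2 \<le> a * (\<Sum>k=1..d. w1 k * p k) + b * (\<Sum>k=1..d. w2 k * p k)"
    using w1(3) w2(3) assms(3,4) by (intro add_mono mult_left_mono)
  ultimately show ?thesis using w1(2) w2(2) by (intro under_zonotopeI[of d w]) auto
qed

lemma thermo_curve_upper_bound:
  assumes g: "\<forall>k\<in>{1..d}. 0 < g k" and ord: "thermo_order d g p \<pi>"
    and "under_zonotope d g p x y"
  shows "y \<le> thermo_curve d g p \<pi> x"
proof -
  obtain w where w: "\<forall>k\<in>{1..d}. 0 \<le> w k \<and> w k \<le> 1"
    and x: "(\<Sum>k=1..d. w k * g k) = x" and y: "y \<le> (\<Sum>k=1..d. w k * p k)"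
    using assms(3) unfolding under_zonotope_def by blast
  have \<pi>: "\<pi> permutes {1..d}" using ord by (simp add: thermo_order_def)
  have reindex: "(\<Sum>k=1..d. f k) = (\<Sum>j=1..d. f (\<pi> j))" for f :: "nat \<Rightarrow> real"
    using sum.permute[OF \<pi>, of f] by simp
  have \<pi>_in: "\<pi> j \<in> {1..d}" if "j \<in> {1..d}" for j
    using permutes_in_image[OF \<pi>] that by blast
  have "(\<Sum>k=1..d. w k * p k) = (\<Sum>j=1..d. p (\<pi> j) / g (\<pi> j) * (w (\<pi> j) * g (\<pi> j)))"
    unfolding reindex[of "\<lambda>k. w k * p k"]
  proof (rule sum.cong[OF refl])
    fix j assume "j \<in> {1..d}"
    then have "g (\<pi> j) \<noteq> 0" using g \<pi>_in by force
    then show "w (\<pi> j) * p (\<pi> j) = p (\<pi> j) / g (\<pi> j) * (w (\<pi> j) * g (\<pi> j))" by simp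
  qed
  also have "\<dots> \<le> thermo_curve d g p \<pi> x"
    unfolding thermo_curve_def
  proof (rule greedy_fill_optimal)
    show "\<forall>i j. 1 \<le> i \<and> i \<le> j \<and> j \<le> d \<longrightarrow> p (\<pi> j) / g (\<pi> j) \<le> p (\<pi> i) / g (\<pi> i)"
      using ord by (simp add: thermo_order_def)
    show "\<forall>j\<in>{1..d}. 0 \<le> w (\<pi> j) * g (\<pi> j) \<and> w (\<pi> j) * g (\<pi> j) \<le> g (\<pi> j)"
    proof
      fix j assume "j \<in> {1..d}"
      then have "0 < g (\<pi> j)" "0 \<le> w (\<pi> j)" "w (\<pi> j) \<le> 1" using g w \<pi>_in by force+
      then show "0 \<le> w (\<pi> j) * g (\<pi> j) \<and> w (\<pi> j) * g (\<pi> j) \<le> g (\<pi> j)" by simp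
    qed
    show "x = (\<Sum>j=1..d. w (\<pi> j) * g (\<pi> j))"
      using reindex[of "\<lambda>k. w k * g k"] x by simp
  qed
  finally show ?thesis using y by simp
qed

lemma thermo_curve_under_zonotope:
  assumes g: "\<forall>k\<in>{1..d}. 0 < g k" and \<pi>: "\<pi> permutes {1..d}"
    and x: "0 \<le> x" "x \<le> (\<Sum>k=1..d. g k)"
  shows "under_zonotope d g p x (thermo_curve d g p \<pi> x)"
proof -
  have reindex: "(\<Sum>k=1..d. f k) = (\<Sum>j=1..d. f (\<pi> j))" for f :: "nat \<Rightarrow> real"
    using sum.permute[OF \<pi>, of f] by simp
  have g_\<pi>: "0 < g (\<pi> j)" if "j \<in> {1..d}" for j
    using g permutes_in_image[OF \<pi>] that by blast
  define u where "u j = min (g (\<pi> j)) (max 0 (x - (\<Sum>i=1..<j. g (\<pi> i))))" for j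
  define w where "w k = u (inv \<pi> k) / g k" for k
  have w_\<pi>: "w (\<pi> j) = u j / g (\<pi> j)" for j
    using permutes_inverses(2)[OF \<pi>] by (simp add: w_def)
  have w_\<pi>_bounds: "0 \<le> w (\<pi> j) \<and> w (\<pi> j) \<le> 1" if "j \<in> {1..d}" for j
    using g_\<pi>[OF that] by (auto simp: w_\<pi> u_def)
  have "0 \<le> w k \<and> w k \<le> 1" if "k \<in> {1..d}" for k
  proof -
    have "inv \<pi> k \<in> {1..d}" using permutes_in_image[OF permutes_inv[OF \<pi>]] that by blast
    then show ?thesis using w_\<pi>_bounds permutes_inverses(1)[OF \<pi>, of k] by metis
  qed
  moreover have "(\<Sum>k=1..d. w k * g k) = x"
  proof -
    have "(\<Sum>k=1..d. w k * g k) = (\<Sum>j=1..d. u j)"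
      unfolding reindex[of "\<lambda>k. w k * g k"]
      using g_\<pi> by (intro sum.cong) (simp_all add: w_\<pi> less_imp_neq[symmetric])
    also have "\<dots> = min x (\<Sum>j=1..d. g (\<pi> j))"
      unfolding u_def using greedy_fill_sum[OF x(1), of d "\<lambda>j. g (\<pi> j)"] g_\<pi>
      by (simp add: less_imp_le)
    finally show ?thesis using x(2) reindex[of g] by simp
  qed
  moreover have "thermo_curve d g p \<pi> x = (\<Sum>k=1..d. w k * p k)"
    unfolding reindex[of "\<lambda>k. w k * p k"] thermo_curve_def
    using g_\<pi> by (intro sum.cong) (simp_all add: w_\<pi> u_def less_imp_neq[symmetric])
  ultimately show ?thesis by (intro under_zonotopeI[of d w]) auto
qed

lemma exists_sorting_permutation:
  fixes f :: "nat \<Rightarrow> 'a::linorder"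
  shows "\<exists>\<pi>. \<pi> permutes {1..d} \<and> (\<forall>i j. 1 \<le> i \<and> i \<le> j \<and> j \<le> d \<longrightarrow> f (\<pi> j) \<le> f (\<pi> i))"
proof -
  define xs where "xs = sort_key f [1..<d+1]"
  define \<pi> where "\<pi> j = (if j \<in> {1..d} then xs ! (d - j) else j)" for j
  have len: "length xs = d" and "distinct xs" and set_xs: "set xs = {1..d}"
    by (auto simp: xs_def)
  have "bij_betw (\<lambda>j. d - j) {1..d} {..<d}"
    by (rule bij_betw_byWitness[where f' = "\<lambda>i. d - i"]) auto
  then have "bij_betw ((!) xs \<circ> (\<lambda>j. d - j)) {1..d} {1..d}"
    using bij_betw_nth[OF \<open>distinct xs\<close>] len set_xs by (auto intro: bij_betw_trans)
  then have "bij_betw \<pi> {1..d} {1..d}"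
    by (rule bij_betw_cong[THEN iffD1, rotated]) (simp add: \<pi>_def)
  then have "\<pi> permutes {1..d}"
    by (rule bij_imp_permutes) (auto simp: \<pi>_def)
  moreover have "f (\<pi> j) \<le> f (\<pi> i)" if "1 \<le> i" "i \<le> j" "j \<le> d" for i j
  proof -
    have "sorted (map f xs)" by (simp add: xs_def)
    then have "f (xs ! (d - j)) \<le> f (xs ! (d - i))"
      using that len by (auto simp: sorted_iff_nth_mono)
    then show ?thesis using that by (simp add: \<pi>_def)
  qed
  ultimately show ?thesis by blast
qed

lemma exists_thermo_order: "\<exists>\<pi>. thermo_order d g p \<pi>"
  using exists_sorting_permutation[of d "\<lambda>k. p k / g k"] by (simp add: thermo_order_def)

lemma thermomaj_if_under_zonotope_subset:
  assumes g: "\<forall>k\<in>{1..d}. 0 < g k" and ord: "thermo_order d g p \<pi>"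
    and sub: "\<And>x y. under_zonotope d g v x y \<Longrightarrow> under_zonotope d g p x y"
  shows "thermomaj d g p v"
proof -
  obtain \<sigma> where ord_v: "thermo_order d g v \<sigma>" using exists_thermo_order by blast
  then have "\<sigma> permutes {1..d}" by (simp add: thermo_order_def)
  then have "thermo_curve d g v \<sigma> x \<le> thermo_curve d g p \<pi> x"
    if "0 \<le> x" "x \<le> (\<Sum>k=1..d. g k)" for x
    using that by (intro thermo_curve_upper_bound[OF g ord] sub thermo_curve_under_zonotope[OF g])
  then show ?thesis unfolding thermomaj_def using ord ord_v by blast
qed

text \<open>The zonotope of v is the parallelogram spanned by (g 1, v 1) and
  (\<Sum> g - g 1, \<Sum> v - v 1); each of its points is a subconvex combination of one spanning
  vector and their sum.\<close>
lemma under_zonotope_two_level: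
  assumes g: "\<forall>k\<in>{1..d}. 0 \<le> g k" and "1 \<le> d"
    and v: "\<forall>k\<in>{2..d}. v k = c * g k"
    and P1: "under_zonotope d g p (g 1) (v 1)"
    and P2: "under_zonotope d g p ((\<Sum>k=1..d. g k) - g 1) ((\<Sum>k=1..d. v k) - v 1)"
    and total: "(\<Sum>k=1..d. v k) \<le> (\<Sum>k=1..d. p k)"
    and "under_zonotope d g v x y"
  shows "under_zonotope d g p x y"
proof -
  have split: "(\<Sum>k=1..d. f k) = f 1 + (\<Sum>k=2..d. f k)" for f :: "nat \<Rightarrow> real"
    using sum.atLeast_Suc_atMost[OF \<open>1 \<le> d\<close>, of f] by (simp add: numeral_2_eq_2)
  define G where "G = (\<Sum>k=2..d. g k)"
  define V where "V = (\<Sum>k=1..d. v k)"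
  obtain u where u: "\<forall>k\<in>{1..d}. 0 \<le> u k \<and> u k \<le> 1"
    and x: "(\<Sum>k=1..d. u k * g k) = x" and y: "y \<le> (\<Sum>k=1..d. u k * v k)"
    using assms(7) unfolding under_zonotope_def by blast
  define S where "S = (\<Sum>k=2..d. u k * g k)"
  have "0 \<le> S" "S \<le> G"
    unfolding S_def G_def using u g by (auto intro!: sum_nonneg sum_mono mult_left_le_one_le)
  then obtain b where b: "0 \<le> b" "b \<le> 1" "S = b * G"
  proof (cases "G = 0")
    case True
    with \<open>0 \<le> S\<close> \<open>S \<le> G\<close> show ?thesis using that[of 0] by simp
  next
    case False
    with \<open>0 \<le> S\<close> \<open>S \<le> G\<close> show ?thesis using that[of "S / G"] by simp
  qed
  have "(\<Sum>k=2..d. u k * v k) = c * S" and "V - v 1 = c * G"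
    unfolding S_def G_def V_def split[of v] using v by (auto simp: sum_distrib_left intro!: sum.cong)
  then have y': "y \<le> u 1 * v 1 + b * (V - v 1)" and x': "x = u 1 * g 1 + b * G"
    using x y b(3) split[of "\<lambda>k. u k * v k"] split[of "\<lambda>k. u k * g k"]
    by (simp_all add: S_def mult.left_commute)
  have P2': "under_zonotope d g p G (V - v 1)"
    using P2 unfolding split[of g] G_def V_def by simp
  have P3: "under_zonotope d g p (g 1 + G) V"
    using under_zonotope_le[OF under_zonotope_total[of d g p] total]
    unfolding split[of g] G_def V_def .
  have u1: "0 \<le> u 1" "u 1 \<le> 1" using u \<open>1 \<le> d\<close> by auto
  have "under_zonotope d g p x (u 1 * v 1 + b * (V - v 1))"
  proof (cases "b \<le> u 1")
    case True
    from under_zonotope_subconvex[OF P1 P3, of "u 1 - b" b] show ?thesis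
      using True b u1 x' by (auto simp: algebra_simps)
  next
    case False
    from under_zonotope_subconvex[OF P2' P3, of "b - u 1" "u 1"] show ?thesis
      using False b u1 x' by (auto simp: algebra_simps)
  qed
  then show ?thesis using y' by (rule under_zonotope_le)
qed

section \<open>Gibbs states\<close>

lemma gibbs_pos: "1 \<le> d \<Longrightarrow> 0 < gibbs d b E k"
  unfolding gibbs_def by (intro divide_pos_pos sum_pos) auto

lemma gibbs_sum: "1 \<le> d \<Longrightarrow> (\<Sum>k=1..d. gibbs d b E k) = 1"
proof -
  assume "1 \<le> d"
  then have "0 < (\<Sum>i=1..d. exp (- b * E i))" by (intro sum_pos) auto
  then show ?thesis unfolding gibbs_def sum_divide_distrib[symmetric] by simp
qed

lemma gibbs_antimono:
  assumes "0 \<le> b" "E k \<le> E l"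
  shows "gibbs d b E l \<le> gibbs d b E k"
  unfolding gibbs_def using assms by (intro divide_right_mono sum_nonneg) (auto simp: mult_left_mono)

lemma gibbs_ratio_antimono:
  assumes "b \<le> a" "E k \<le> E l"
  shows "gibbs d a E l * gibbs d b E k \<le> gibbs d a E k * gibbs d b E l"
proof -
  have "- a * E l + - b * E k \<le> - a * E k + - b * E l"
    using mult_right_mono[OF assms(1), of "E l - E k"] assms(2) by (simp add: algebra_simps)
  then have "exp (- a * E l) * exp (- b * E k) \<le> exp (- a * E k) * exp (- b * E l)"
    by (simp flip: exp_add)
  then show ?thesis
    unfolding gibbs_def by (simp add: divide_right_mono sum_nonneg)
qed

lemma ge_first_if_ratio_antimono:
  fixes p g :: "nat \<Rightarrow> real"
  assumes g: "\<forall>k\<in>{1..d}. 0 < g k" and "1 \<le> d"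
    and ratio: "\<forall>k\<in>{1..d}. p k / g k \<le> p 1 / g 1"
    and total: "(\<Sum>k=1..d. p k) = (\<Sum>k=1..d. g k)"
  shows "g 1 \<le> p 1"
proof -
  have "p k \<le> p 1 / g 1 * g k" if "k \<in> {1..d}" for k
    using ratio g that by (simp add: divide_le_eq)
  then have "(\<Sum>k=1..d. p k) \<le> p 1 / g 1 * (\<Sum>k=1..d. g k)"
    unfolding sum_distrib_left by (intro sum_mono) auto
  moreover have "0 < (\<Sum>k=1..d. g k)" "0 < g 1" using g \<open>1 \<le> d\<close> by (auto intro: sum_pos)
  ultimately show ?thesis using total by (simp add: le_divide_eq)
qed

section \<open>The two-bath protocol\<close>

lemma stepwise_antimono:
  fixes h :: "nat \<Rightarrow> 'a::order"
  assumes steps: "\<forall>k\<in>{1..<d}. h (k+1) \<le> h k" and "1 \<le> i" "i \<le> j" "j \<le> d"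
  shows "h j \<le> h i"
  using assms(3,4)
proof (induction j rule: dec_induct)
  case (step n)
  then have "h (Suc n) \<le> h n" using steps assms(2) by auto
  with step show ?case by simp
qed simp

lemma sum_delta_mult:
  fixes f :: "'a \<Rightarrow> 'b::semiring_0"
  assumes "finite A" "a \<in> A"
  shows "(\<Sum>k\<in>A. (if k = a then c else 0) * f k) = c * f a"
  using assms by (simp add: if_distrib[of "\<lambda>x. x * _"] sum.delta cong: if_cong)

locale two_bath_protocol =
  fixes d :: nat and E p :: "nat \<Rightarrow> real" and \<alpha> \<beta> :: real
  assumes d: "d \<ge> 2"
    and E_steps: "\<forall>k\<in>{1..<d}. E k \<le> E (k+1)"
    and temperatures: "\<alpha> > \<beta>" "\<beta> \<ge> 0"
    and gamma_1: "gibbs d \<alpha> E 1 > 1/2"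
    and Gamma_1: "gibbs d \<beta> E 1 < gibbs d \<beta> E d + gibbs d \<beta> E (d-1)"
    and p: "prob_vec d p"
    and p_steps: "\<forall>k\<in>{1..<d}. p k / gibbs d \<alpha> E k \<ge> p (k+1) / gibbs d \<alpha> E (k+1)"
begin

abbreviation "\<gamma> \<equiv> gibbs d \<alpha> E"
abbreviation "\<Gamma> \<equiv> gibbs d \<beta> E"

definition "\<theta> = (\<Gamma> 1 - \<Gamma> d) / \<Gamma> (d-1)"
definition "q1 = p d + \<theta> * p (d-1)"
definition "q k = (if k = 1 then q1 else \<Gamma> k / (1 - \<Gamma> 1) * (1 - q1))"
definition "r k = (if k = 1 then 1 - (1 - \<gamma> 1) / \<gamma> 1 * q1 else \<gamma> k / \<gamma> 1 * q1)"
definition "\<rho> = (1 - \<gamma> 1) / \<gamma> 1"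

lemma d_pos: "1 \<le> d"
  using d by simp

lemma gamma_pos: "0 < \<gamma> k" and Gamma_pos: "0 < \<Gamma> k"
  using gibbs_pos[OF d_pos] by blast+

lemma gamma_sum: "(\<Sum>k=1..d. \<gamma> k) = 1" and Gamma_sum: "(\<Sum>k=1..d. \<Gamma> k) = 1"
  using gibbs_sum[OF d_pos] by blast+

lemma sum_split_first: "(\<Sum>k=1..d. f k) = f 1 + (\<Sum>k=2..d. f k)"
  using sum.atLeast_Suc_atMost[OF d_pos, of f] by (simp add: numeral_2_eq_2)

lemma first_lt_1_if_sum_1:
  fixes g :: "nat \<Rightarrow> real"
  assumes "\<And>k. 0 < g k" "(\<Sum>k=1..d. g k) = 1"
  shows "g 1 < 1"
  using assms d sum_split_first[of g] sum_pos[of "{2..d}" g] by force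

lemma E_mono: "1 \<le> k \<Longrightarrow> k \<le> l \<Longrightarrow> l \<le> d \<Longrightarrow> E k \<le> E l"
  using stepwise_antimono[of d "\<lambda>k. - E k" k l] E_steps by simp

lemma p_nonneg: "k \<in> {1..d} \<Longrightarrow> 0 \<le> p k" and p_sum: "(\<Sum>k=1..d. p k) = 1"
  using p by (auto simp: prob_vec_def)

lemma p_gamma_antimono: "1 \<le> i \<Longrightarrow> i \<le> j \<Longrightarrow> j \<le> d \<Longrightarrow> p j / \<gamma> j \<le> p i / \<gamma> i"
  using stepwise_antimono[of d "\<lambda>k. p k / \<gamma> k" i j] p_steps by simp

lemma p_Gamma_antimono:
  assumes ij: "1 \<le> i" "i \<le> j" "j \<le> d"
  shows "p j / \<Gamma> j \<le> p i / \<Gamma> i"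
proof -
  have pos: "0 < \<gamma> i" "0 < \<gamma> j" "0 < \<Gamma> i" "0 < \<Gamma> j"
    using gamma_pos Gamma_pos by auto
  have "\<gamma> j / \<Gamma> j \<le> \<gamma> i / \<Gamma> i"
    using gibbs_ratio_antimono[of \<beta> \<alpha> E i j d] temperatures E_mono[OF ij] pos
    by (simp add: field_simps)
  then have "p j / \<gamma> j * (\<gamma> j / \<Gamma> j) \<le> p i / \<gamma> i * (\<gamma> i / \<Gamma> i)"
    using p_gamma_antimono[OF ij] p_nonneg[of i] ij pos by (intro mult_mono) auto
  then show ?thesis using pos by simp
qed

lemma theta_nonneg: "0 \<le> \<theta>"
proof -
  have "\<Gamma> d \<le> \<Gamma> 1" using gibbs_antimono[of \<beta> E 1 d] temperatures E_mono[of 1 d] d by simp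
  then show ?thesis using Gamma_pos[of "d-1"] by (simp add: \<theta>_def)
qed

lemma theta_lt_1: "\<theta> < 1"
  using Gamma_1 Gamma_pos[of "d-1"] by (simp add: \<theta>_def divide_less_eq)

lemma theta_Gamma: "\<theta> * \<Gamma> (d-1) = \<Gamma> 1 - \<Gamma> d"
  using Gamma_pos[of "d-1"] by (simp add: \<theta>_def)

lemma gamma_1_le_p_1: "\<gamma> 1 \<le> p 1"
  using ge_first_if_ratio_antimono[of d \<gamma> p] gamma_pos d_pos p_gamma_antimono p_sum gamma_sum
  by simp

lemma q1_le_p_1: "q1 \<le> p 1"
proof -
  have "p k \<le> p 1 / \<Gamma> 1 * \<Gamma> k" if "k \<in> {1..d}" for k
    using p_Gamma_antimono[of 1 k] Gamma_pos[of 1] Gamma_pos[of k] that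
    by (simp add: field_simps)
  then have "q1 \<le> p 1 / \<Gamma> 1 * \<Gamma> d + \<theta> * (p 1 / \<Gamma> 1 * \<Gamma> (d-1))"
    unfolding q1_def using d theta_nonneg by (intro add_mono mult_left_mono) auto
  also have "\<dots> = p 1 / \<Gamma> 1 * (\<Gamma> d + \<theta> * \<Gamma> (d-1))"
    by (simp add: algebra_simps)
  also have "\<dots> = p 1"
    using theta_Gamma Gamma_pos[of 1] by simp
  finally show ?thesis .
qed

lemma q1_le_gamma_1: "q1 \<le> \<gamma> 1"
proof (cases "d = 2")
  case True
  have "(\<Sum>k=1..d. f k) = f 1 + f 2" for f :: "nat \<Rightarrow> real"
    using True by (simp add: numeral_2_eq_2)
  then have sums: "p 2 = 1 - p 1" "\<gamma> 2 = 1 - \<gamma> 1"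
    using p_sum gamma_sum by (simp_all add: eq_diff_eq')
  have "\<gamma> 2 * \<Gamma> 1 \<le> \<gamma> 1 * \<Gamma> 2"
    using gibbs_ratio_antimono[of \<beta> \<alpha> E 1 2 d] temperatures E_mono[of 1 2] True by simp
  then have "\<gamma> 2 \<le> \<gamma> 1 * \<Gamma> 2 / \<Gamma> 1"
    using Gamma_pos[of 1] by (simp add: le_divide_eq)
  also have "\<dots> \<le> p 1 * \<Gamma> 2 / \<Gamma> 1"
    using gamma_1_le_p_1 Gamma_pos[of 1] Gamma_pos[of 2]
    by (intro divide_right_mono mult_right_mono) auto
  also have "\<dots> = 1 - q1"
  proof -
    have "q1 = p 2 + (\<Gamma> 1 - \<Gamma> 2) / \<Gamma> 1 * p 1"
      unfolding q1_def \<theta>_def using True by simp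
    also have "\<dots> = p 2 + p 1 - p 1 * \<Gamma> 2 / \<Gamma> 1"
      using Gamma_pos[of 1] by (simp add: field_simps)
    finally show ?thesis using sums by simp
  qed
  finally show ?thesis using sums by simp
next
  case False
  then have "3 \<le> d" using d by simp
  have "(\<Sum>k\<in>{1, d-1, d}. p k) \<le> (\<Sum>k=1..d. p k)"
    using \<open>3 \<le> d\<close> p_nonneg by (intro sum_mono2) auto
  then have "p 1 + p (d-1) + p d \<le> 1"
    using \<open>3 \<le> d\<close> p_sum by simp
  moreover have "\<theta> * p (d-1) \<le> p (d-1)"
    using theta_lt_1 p_nonneg[of "d-1"] d by (simp add: mult_left_le_one_le theta_nonneg)
  ultimately show ?thesis using gamma_1_le_p_1 gamma_1 by (simp add: q1_def)
qed

lemma q_sum: "(\<Sum>k=1..d. q k) = 1"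
proof -
  have "(\<Sum>k=2..d. q k) = (1 - q1) / (1 - \<Gamma> 1) * (\<Sum>k=2..d. \<Gamma> k)"
    unfolding sum_distrib_left by (intro sum.cong) (auto simp: q_def)
  also have "\<dots> = 1 - q1"
  proof -
    have "(\<Sum>k=2..d. \<Gamma> k) = 1 - \<Gamma> 1"
      using Gamma_sum sum_split_first[of \<Gamma>] by simp
    then show ?thesis using first_lt_1_if_sum_1[OF Gamma_pos Gamma_sum] by simp
  qed
  finally show ?thesis unfolding sum_split_first[of q] by (simp add: q_def)
qed

lemma r_sum: "(\<Sum>k=1..d. r k) = 1"
proof -
  have "(\<Sum>k=2..d. r k) = q1 / \<gamma> 1 * (\<Sum>k=2..d. \<gamma> k)"
    unfolding sum_distrib_left by (intro sum.cong) (auto simp: r_def)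
  also have "\<dots> = (1 - \<gamma> 1) / \<gamma> 1 * q1"
    using gamma_sum sum_split_first[of \<gamma>] by (simp add: eq_diff_eq')
  finally show ?thesis unfolding sum_split_first[of r] by (simp add: r_def)
qed

lemma r_ratio_antimono: "\<forall>k\<in>{1..<d}. r k / \<gamma> k \<ge> r (k+1) / \<gamma> (k+1)"
proof
  have "q1 \<le> r 1"
    using q1_le_gamma_1 gamma_pos[of 1] by (simp add: r_def field_simps)
  then have r_1: "q1 / \<gamma> 1 \<le> r 1 / \<gamma> 1"
    using gamma_pos[of 1] by (simp add: divide_right_mono)
  have r_k: "r k / \<gamma> k = q1 / \<gamma> 1" if "k \<noteq> 1" for k
    using that gamma_pos[of k] by (simp add: r_def)
  fix k assume "k \<in> {1..<d}"
  then show "r (k+1) / \<gamma> (k+1) \<le> r k / \<gamma> k"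
    using r_1 r_k[of "k+1"] r_k[of k] by (cases "k = 1") auto
qed

lemma q_ground_vertex_under_p: "under_zonotope d \<Gamma> p (\<Gamma> 1) q1"
proof (rule under_zonotopeI[where w = "\<lambda>k. if k = 1 then 1 else 0"])
  have "(\<Sum>k=1..d. (if k = 1 then 1 else 0) * f k) = f 1" for f :: "nat \<Rightarrow> real"
    using d_pos by (simp add: sum_delta_mult)
  then show "(\<Sum>k=1..d. (if k = 1 then 1 else 0) * \<Gamma> k) = \<Gamma> 1"
    and "q1 \<le> (\<Sum>k=1..d. (if k = 1 then 1 else 0) * p k)"
    using q1_le_p_1 by simp_all
qed simp

lemma q_excited_vertex_under_p: "under_zonotope d \<Gamma> p (1 - \<Gamma> 1) (1 - q1)"
proof -
  define w where "w k = 1 - (if k = d-1 then \<theta> else 0) - (if k = d then 1 else 0)" for k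
  have "(\<Sum>k=1..d. w k * f k) = (\<Sum>k=1..d. f k) - \<theta> * f (d-1) - f d" for f :: "nat \<Rightarrow> real"
  proof -
    have "(\<Sum>k=1..d. w k * f k) = (\<Sum>k=1..d. f k)
        - (\<Sum>k=1..d. (if k = d-1 then \<theta> else 0) * f k)
        - (\<Sum>k=1..d. (if k = d then 1 else 0) * f k)"
      unfolding w_def left_diff_distrib sum_subtractf by simp
    also have "\<dots> = (\<Sum>k=1..d. f k) - \<theta> * f (d-1) - f d"
      using d by (subst (1 2) sum_delta_mult) auto
    finally show ?thesis .
  qed
  then show ?thesis
    using theta_nonneg theta_lt_1 theta_Gamma d Gamma_sum p_sum
    by (intro under_zonotopeI[of d w]) (auto simp: w_def q1_def)
qed

lemma p_thermomaj_q: "thermomaj d \<Gamma> p q"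
proof -
  have "thermo_order d \<Gamma> p id"
    unfolding thermo_order_def using p_Gamma_antimono by simp
  moreover have "under_zonotope d \<Gamma> p x y" if "under_zonotope d \<Gamma> q x y" for x y
    using that
  proof (rule under_zonotope_two_level[where c = "(1 - q1) / (1 - \<Gamma> 1)", rotated -1])
    show "under_zonotope d \<Gamma> p (\<Gamma> 1) (q 1)"
      using q_ground_vertex_under_p by (simp add: q_def)
    show "under_zonotope d \<Gamma> p ((\<Sum>k=1..d. \<Gamma> k) - \<Gamma> 1) ((\<Sum>k=1..d. q k) - q 1)"
      using q_excited_vertex_under_p Gamma_sum q_sum by (simp add: q_def)
  qed (use Gamma_pos d_pos q_sum p_sum in \<open>auto simp: q_def less_imp_le\<close>)
  ultimately show ?thesis
    using Gamma_pos by (intro thermomaj_if_under_zonotope_subset) auto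
qed

lemma rho_bounds: "0 \<le> \<rho>" "\<rho> \<le> 1"
  using gamma_pos[of 1] gamma_1 first_lt_1_if_sum_1[OF gamma_pos gamma_sum]
  by (auto simp: \<rho>_def field_simps)

lemma rho_gamma_1: "\<rho> * \<gamma> 1 = 1 - \<gamma> 1" and r_1_rho: "r 1 = 1 - \<rho> * q1"
  using gamma_pos[of 1] by (simp_all add: \<rho>_def r_def)

lemma sum_rho_delta: "(\<Sum>k=1..d. (if k = 1 then \<rho> else 0) * f k) = \<rho> * f 1"
  using d_pos by (simp add: sum_delta_mult)

lemma r_ground_vertex_under_q: "under_zonotope d \<gamma> q (\<gamma> 1) (r 1)"
proof (rule under_zonotopeI[where w = "\<lambda>k. 1 - (if k = 1 then \<rho> else 0)"])
  have "(\<Sum>k=1..d. (1 - (if k = 1 then \<rho> else 0)) * f k) = (\<Sum>k=1..d. f k) - \<rho> * f 1"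
    for f :: "nat \<Rightarrow> real"
    using sum_rho_delta by (simp add: left_diff_distrib sum_subtractf)
  then show "(\<Sum>k=1..d. (1 - (if k = 1 then \<rho> else 0)) * \<gamma> k) = \<gamma> 1"
    and "r 1 \<le> (\<Sum>k=1..d. (1 - (if k = 1 then \<rho> else 0)) * q k)"
    using rho_gamma_1 r_1_rho gamma_sum q_sum by (simp_all add: q_def)
qed (use rho_bounds in auto)

lemma r_excited_vertex_under_q: "under_zonotope d \<gamma> q (1 - \<gamma> 1) (1 - r 1)"
  using rho_bounds rho_gamma_1 r_1_rho sum_rho_delta
  by (intro under_zonotopeI[where w = "\<lambda>k. if k = 1 then \<rho> else 0"]) (auto simp: q_def)

lemma q_thermomaj_r: "thermomaj d \<gamma> q r"
proof -
  obtain \<sigma> where "thermo_order d \<gamma> q \<sigma>" using exists_thermo_order by blast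
  moreover have "under_zonotope d \<gamma> q x y" if "under_zonotope d \<gamma> r x y" for x y
    using that
  proof (rule under_zonotope_two_level[where c = "q1 / \<gamma> 1", rotated -1])
    show "under_zonotope d \<gamma> q ((\<Sum>k=1..d. \<gamma> k) - \<gamma> 1) ((\<Sum>k=1..d. r k) - r 1)"
      using r_excited_vertex_under_q gamma_sum r_sum by simp
  qed (use r_ground_vertex_under_q gamma_pos d_pos r_sum q_sum in \<open>auto simp: r_def less_imp_le\<close>)
  ultimately show ?thesis
    using gamma_pos by (intro thermomaj_if_under_zonotope_subset) auto
qed

end

theorem lemma17:
  fixes d :: nat and E p :: "nat \<Rightarrow> real" and \<alpha> \<beta> :: real
  assumes "d \<ge> 2"
    and "\<forall>k\<in>{1..<d}. E k \<le> E (k+1)"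
    and "\<alpha> > \<beta>" and "\<beta> \<ge> 0"
    and "gibbs d \<alpha> E 1 > 1/2"
    and "gibbs d \<beta> E 1 < gibbs d \<beta> E d + gibbs d \<beta> E (d-1)"
    and "prob_vec d p"
    and "\<forall>k\<in>{1..<d}. p k / gibbs d \<alpha> E k \<ge> p (k+1) / gibbs d \<alpha> E (k+1)"
  shows "let \<gamma> = gibbs d \<alpha> E; \<Gamma> = gibbs d \<beta> E;
             q1 = p d + (\<Gamma> 1 - \<Gamma> d) / \<Gamma> (d-1) * p (d-1);
             q = (\<lambda>k. if k = 1 then q1 else \<Gamma> k / (1 - \<Gamma> 1) * (1 - q1));
             r = (\<lambda>k. if k = 1 then 1 - (1 - \<gamma> 1) / \<gamma> 1 * q1 else \<gamma> k / \<gamma> 1 * q1)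
         in thermomaj d \<Gamma> p q \<and> thermomaj d \<gamma> q r \<and>
            (\<forall>k\<in>{1..<d}. r k / \<gamma> k \<ge> r (k+1) / \<gamma> (k+1))"
proof -
  interpret two_bath_protocol d E p \<alpha> \<beta>
    using assms by unfold_locales
  have q: "q = (\<lambda>k. if k = 1 then q1 else \<Gamma> k / (1 - \<Gamma> 1) * (1 - q1))"
    and r: "r = (\<lambda>k. if k = 1 then 1 - (1 - \<gamma> 1) / \<gamma> 1 * q1 else \<gamma> k / \<gamma> 1 * q1)"
    by (simp_all add: fun_eq_iff q_def r_def)
  show ?thesis
    using p_thermomaj_q q_thermomaj_r r_ratio_antimono
    unfolding Let_def q r q1_def \<theta>_def by blast
qed

end
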